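(* Let $G$ be a graph with edge set $E$, $k\ge1$, suppose $M_k(G)$ is a connected matroid, let $B$ be a base of $M_k(G)$ and $e\in B$, and let $A$ be the component of $G\langle B\rangle$ containing $e$. Suppose $A$ has at least two cycles and $e\in E(\lfloor A\rfloor)$. Then the fundamental cocircuit $K(e,B)$ equals $(E\setminus B)\cup\{e\}$.
   Context: Graphs are finite, may have loops and parallel edges, and have no isolated vertices. A leaf is a vertex incident to exactly one edge, which is not a loop. For $X\subseteq E$, $G\langle X\rangle$ is the subgraph with edge set $X$ and vertex set the vertices incident to $X$. For $k\ge0$, $M_k(G)$ is the matroid on $E$ whose circuits are the inclusion-minimal members of $\{C\subseteq E:C\neq\emptyset,\ |C|=|V(G\langle C\rangle)|+k\}$. A matroid is connected if its ground set has at least two elements and every two elements lie in a common circuit. For a base $B$ and $e\in B$, $K(e,B)$ is the unique cocircuit $K$ with $K\cap B=\{e\}$. For a connected graph $A$ containing a cycle, its kernel $\lfloor A\rfloor$ is the subgraph obtained by repeatedly deleting leaves (with their incident edges) until no leaf remains. *)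

theory Defs
  imports Main
begin

text \<open>A graph is given by a finite edge set E and an incidence map inc: each edge
  is incident to one vertex (a loop) or two vertices. Vertices are exactly the
  vertices incident to edges (no isolated vertices).\<close>

definition graph :: "'e set \<Rightarrow> ('e \<Rightarrow> 'v set) \<Rightarrow> bool" where
  "graph E inc \<longleftrightarrow> finite E \<and> (\<forall>f\<in>E. card (inc f) = 1 \<or> card (inc f) = 2)"

definition verts :: "('e \<Rightarrow> 'v set) \<Rightarrow> 'e set \<Rightarrow> 'v set" where
  "verts inc X = (\<Union>f\<in>X. inc f)"

definition Mk_circuit :: "'e set \<Rightarrow> ('e \<Rightarrow> 'v set) \<Rightarrow> nat \<Rightarrow> 'e set \<Rightarrow> bool" where
  "Mk_circuit E inc k C \<longleftrightarrow>
     (let P = (\<lambda>D. D \<subseteq> E \<and> D \<noteq> {} \<and> card D = card (verts inc D) + k)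
      in P C \<and> (\<forall>D. D \<subset> C \<longrightarrow> \<not> P D))"

definition Mk_indep :: "'e set \<Rightarrow> ('e \<Rightarrow> 'v set) \<Rightarrow> nat \<Rightarrow> 'e set \<Rightarrow> bool" where
  "Mk_indep E inc k X \<longleftrightarrow> X \<subseteq> E \<and> (\<forall>C. Mk_circuit E inc k C \<longrightarrow> \<not> C \<subseteq> X)"

definition Mk_base :: "'e set \<Rightarrow> ('e \<Rightarrow> 'v set) \<Rightarrow> nat \<Rightarrow> 'e set \<Rightarrow> bool" where
  "Mk_base E inc k B \<longleftrightarrow> Mk_indep E inc k B \<and> (\<forall>X. B \<subset> X \<longrightarrow> \<not> Mk_indep E inc k X)"

definition Mk_cocircuit :: "'e set \<Rightarrow> ('e \<Rightarrow> 'v set) \<Rightarrow> nat \<Rightarrow> 'e set \<Rightarrow> bool" where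
  "Mk_cocircuit E inc k K \<longleftrightarrow>
     (let P = (\<lambda>D. D \<subseteq> E \<and> (\<forall>B. Mk_base E inc k B \<longrightarrow> D \<inter> B \<noteq> {}))
      in P K \<and> (\<forall>D. D \<subset> K \<longrightarrow> \<not> P D))"

definition Mk_connected :: "'e set \<Rightarrow> ('e \<Rightarrow> 'v set) \<Rightarrow> nat \<Rightarrow> bool" where
  "Mk_connected E inc k \<longleftrightarrow> 2 \<le> card E \<and>
     (\<forall>f\<in>E. \<forall>g\<in>E. \<exists>C. Mk_circuit E inc k C \<and> f \<in> C \<and> g \<in> C)"

definition fund_cocircuit :: "'e set \<Rightarrow> ('e \<Rightarrow> 'v set) \<Rightarrow> nat \<Rightarrow> 'e \<Rightarrow> 'e set \<Rightarrow> 'e set" where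
  "fund_cocircuit E inc k e B = (THE K. Mk_cocircuit E inc k K \<and> K \<inter> B = {e})"

definition edge_adj :: "('e \<Rightarrow> 'v set) \<Rightarrow> 'e set \<Rightarrow> ('e \<times> 'e) set" where
  "edge_adj inc X = {(f, g). f \<in> X \<and> g \<in> X \<and> inc f \<inter> inc g \<noteq> {}}"

definition component_of :: "('e \<Rightarrow> 'v set) \<Rightarrow> 'e set \<Rightarrow> 'e \<Rightarrow> 'e set" where
  "component_of inc X e = {f. (e, f) \<in> (edge_adj inc X)\<^sup>*}"

definition connected_edges :: "('e \<Rightarrow> 'v set) \<Rightarrow> 'e set \<Rightarrow> bool" where
  "connected_edges inc X \<longleftrightarrow> (\<forall>f\<in>X. \<forall>g\<in>X. (f, g) \<in> (edge_adj inc X)\<^sup>*)"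

definition degree :: "('e \<Rightarrow> 'v set) \<Rightarrow> 'e set \<Rightarrow> 'v \<Rightarrow> nat" where
  "degree inc X v = 2 * card {f\<in>X. inc f = {v}} + card {f\<in>X. v \<in> inc f \<and> card (inc f) = 2}"

definition is_cycle :: "('e \<Rightarrow> 'v set) \<Rightarrow> 'e set \<Rightarrow> bool" where
  "is_cycle inc C \<longleftrightarrow> C \<noteq> {} \<and> connected_edges inc C \<and> (\<forall>v\<in>verts inc C. degree inc C v = 2)"

definition is_leaf :: "('e \<Rightarrow> 'v set) \<Rightarrow> 'e set \<Rightarrow> 'v \<Rightarrow> bool" where
  "is_leaf inc X v \<longleftrightarrow> (\<exists>!f. f \<in> X \<and> v \<in> inc f) \<and> (\<forall>f\<in>X. v \<in> inc f \<longrightarrow> card (inc f) = 2)"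

definition leaf_del :: "('e \<Rightarrow> 'v set) \<Rightarrow> ('e set \<times> 'e set) set" where
  "leaf_del inc = {(X, X - {f}) | X f v. f \<in> X \<and> v \<in> inc f \<and> is_leaf inc X v}"

definition kernel_edges :: "('e \<Rightarrow> 'v set) \<Rightarrow> 'e set \<Rightarrow> 'e set" where
  "kernel_edges inc A = (THE X. (A, X) \<in> (leaf_del inc)\<^sup>* \<and> (\<forall>v. \<not> is_leaf inc X v))"

end

theory Submission
  imports Defs
begin

text \<open>Write exc(X) = |X| - |V(G\<langle>X\<rangle>)|. For k \<ge> 1 a set is independent in M_k(G) exactly
  when all its nonempty subsets have excess below k, so for every edge g outside the base B the
  fundamental circuit of g yields a set Y \<subseteq> B of excess k - 1 spanning the ends of g.

  The kernel of A is connected, leafless and contains both cycles, which forces it, and hence A,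
  to have positive excess. By supermodularity of exc, a subset of A avoiding the kernel edge e with
  excess at least exc(A) would cut out of the kernel a proper part of the same excess, and that
  leaves a leaf. Since the rest of B is vertex-disjoint from A, every nonempty subset of B - e has
  excess below k - 1. Hence every such tight set Y contains e, and supermodularity once more shows
  that B - e + f is a base for every f \<notin> B. So the cocircuit meeting B only in e is
  (E - B) \<union> {e}.\<close>

section \<open>Excess\<close>

definition excess :: "('e \<Rightarrow> 'v set) \<Rightarrow> 'e set \<Rightarrow> int" where
  "excess inc X = int (card X) - int (card (verts inc X))"

lemma graph_finite_subset: "graph E inc \<Longrightarrow> X \<subseteq> E \<Longrightarrow> finite X"
  unfolding graph_def using finite_subset by blast

lemma graph_inc:
  assumes "graph E inc" "f \<in> E"
  shows "finite (inc f)" "inc f \<noteq> {}" "card (inc f) \<le> 2"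
proof -
  have c: "card (inc f) = 1 \<or> card (inc f) = 2" using assms unfolding graph_def by blast
  then show "finite (inc f)" using card.infinite by fastforce
  show "inc f \<noteq> {}" "card (inc f) \<le> 2" using c by auto
qed

lemma verts_simps [simp]:
  "verts inc {} = {}" "verts inc (insert f X) = inc f \<union> verts inc X"
  "verts inc (X \<union> Y) = verts inc X \<union> verts inc Y"
  by (auto simp: verts_def)

lemma verts_Int: "verts inc (X \<inter> Y) \<subseteq> verts inc X \<inter> verts inc Y"
  by (auto simp: verts_def)

lemma finite_verts:
  assumes "graph E inc" "X \<subseteq> E"
  shows "finite (verts inc X)"
proof -
  have "finite X" using graph_finite_subset[OF assms] .
  moreover have "\<forall>f\<in>X. finite (inc f)" using graph_inc(1)[OF assms(1)] assms(2) by blast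
  ultimately show ?thesis by (simp add: verts_def)
qed

lemma excess_empty [simp]: "excess inc {} = 0"
  by (simp add: excess_def)

lemma excess_insert:
  assumes "graph E inc" "Z \<subseteq> E" "g \<in> E" "g \<notin> Z"
  shows "excess inc (insert g Z) = excess inc Z + 1 - int (card (inc g - verts inc Z))"
proof -
  have "verts inc (insert g Z) = verts inc Z \<union> (inc g - verts inc Z)" by auto
  moreover have "card (verts inc Z \<union> (inc g - verts inc Z)) = card (verts inc Z) + card (inc g - verts inc Z)"
    using finite_verts[OF assms(1,2)] graph_inc(1)[OF assms(1,3)] by (intro card_Un_disjoint) auto
  ultimately show ?thesis
    using graph_finite_subset[OF assms(1,2)] assms(4) by (simp add: excess_def)
qed

lemma excess_insert_le:
  assumes "graph E inc" "Z \<subseteq> E" "g \<in> E" "g \<notin> Z"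
  shows "excess inc (insert g Z) \<le> excess inc Z + 1"
  using excess_insert[OF assms] by linarith

lemma excess_insert_adjacent_ge:
  assumes "graph E inc" "Z \<subseteq> E" "g \<in> E" "g \<notin> Z" "inc g \<inter> verts inc Z \<noteq> {}"
  shows "excess inc (insert g Z) \<ge> excess inc Z"
proof -
  have "card (inc g - verts inc Z) < card (inc g)"
    using assms(5) graph_inc(1)[OF assms(1,3)] by (intro psubset_card_mono) auto
  then show ?thesis using excess_insert[OF assms(1-4)] graph_inc(3)[OF assms(1,3)] by linarith
qed

lemma excess_singleton_le:
  assumes "graph E inc" "g \<in> E"
  shows "excess inc {g} \<le> 0"
  using graph_inc[OF assms] by (simp add: excess_def verts_def Suc_le_eq card_gt_0_iff)

lemma excess_supermodular:
  assumes "graph E inc" "X \<subseteq> E" "Y \<subseteq> E"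
  shows "excess inc X + excess inc Y \<le> excess inc (X \<union> Y) + excess inc (X \<inter> Y)"
proof -
  have fX: "finite (verts inc X)" and fY: "finite (verts inc Y)"
    using finite_verts assms by blast+
  have "card (X \<union> Y) + card (X \<inter> Y) = card X + card Y"
    using card_Un_Int[OF graph_finite_subset[OF assms(1,2)] graph_finite_subset[OF assms(1,3)]]
    by linarith
  moreover have "card (verts inc X \<union> verts inc Y) + card (verts inc X \<inter> verts inc Y)
      = card (verts inc X) + card (verts inc Y)"
    using card_Un_Int[OF fX fY] by linarith
  moreover have "card (verts inc (X \<inter> Y)) \<le> card (verts inc X \<inter> verts inc Y)"
    using fX by (intro card_mono verts_Int) auto
  ultimately show ?thesis unfolding excess_def verts_simps(3) by linarith
qed

lemma excess_disjoint_Un: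
  assumes "graph E inc" "X \<subseteq> E" "Y \<subseteq> E" "verts inc X \<inter> verts inc Y = {}"
  shows "excess inc (X \<union> Y) = excess inc X + excess inc Y"
proof -
  have "X \<inter> Y = {}"
  proof (rule ccontr)
    assume "X \<inter> Y \<noteq> {}"
    then obtain f where "f \<in> X" "f \<in> Y" by blast
    moreover have "inc f \<noteq> {}" using graph_inc(2)[OF assms(1)] assms(2) \<open>f \<in> X\<close> by blast
    ultimately show False using assms(4) by (auto simp: verts_def)
  qed
  then show ?thesis
    using graph_finite_subset[OF assms(1,2)] graph_finite_subset[OF assms(1,3)]
      finite_verts[OF assms(1,2)] finite_verts[OF assms(1,3)] assms(4)
    by (simp add: excess_def card_Un_disjoint)
qed

lemma excess_exchange_spanned_edges:
  assumes "graph E inc" "U \<subseteq> E" "e \<in> U" "f \<notin> U" "g \<notin> U" "f \<noteq> g"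
    and "inc f \<subseteq> verts inc U" "inc g \<subseteq> verts inc U"
  shows "excess inc (insert g (insert f (U - {e}))) \<ge> excess inc U + 1"
proof -
  let ?W = "insert g (insert f (U - {e}))"
  have "card (U - {e}) + 1 = card U"
    using card_Suc_Diff1[OF graph_finite_subset[OF assms(1,2)] assms(3)] by simp
  moreover have "card ?W = card (U - {e}) + 2"
    using graph_finite_subset[OF assms(1,2)] assms(4-6) by auto
  moreover have "verts inc ?W \<subseteq> verts inc U"
    using assms(7,8) unfolding verts_def by blast
  then have "card (verts inc ?W) \<le> card (verts inc U)"
    using finite_verts[OF assms(1,2)] by (rule card_mono[rotated])
  ultimately show ?thesis unfolding excess_def by linarith
qed

section \<open>Connectivity and leaves\<close>

text \<open>The cut form of connected_edges, convenient for growing a set one adjacent edge at a time.\<close>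

definition edge_connected :: "('e \<Rightarrow> 'v set) \<Rightarrow> 'e set \<Rightarrow> bool" where
  "edge_connected inc X \<longleftrightarrow> (\<forall>S. S \<subseteq> X \<longrightarrow> S \<noteq> {} \<longrightarrow>
      (\<forall>g\<in>S. \<forall>h\<in>X. inc g \<inter> inc h \<noteq> {} \<longrightarrow> h \<in> S) \<longrightarrow> S = X)"

lemma edge_connected_cut:
  assumes "edge_connected inc X" "S \<subseteq> X" "S \<noteq> {}" "S \<noteq> X"
  obtains g h where "g \<in> S" "h \<in> X - S" "inc g \<inter> inc h \<noteq> {}"
proof -
  have "\<exists>g\<in>S. \<exists>h\<in>X - S. inc g \<inter> inc h \<noteq> {}"
    using assms unfolding edge_connected_def by blast
  then show ?thesis using that by blast
qed

lemma rtrancl_edge_adj_closed: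
  assumes "(a, b) \<in> (edge_adj inc X)\<^sup>*" "a \<in> S"
    and "\<forall>g\<in>S. \<forall>h\<in>X. inc g \<inter> inc h \<noteq> {} \<longrightarrow> h \<in> S"
  shows "b \<in> S"
  using assms(1,2)
proof (induction rule: rtrancl_induct)
  case (step y z)
  then show ?case using assms(3) by (auto simp: edge_adj_def)
qed

lemma connected_edges_imp_edge_connected: "connected_edges inc X \<Longrightarrow> edge_connected inc X"
  unfolding connected_edges_def edge_connected_def
proof (intro allI impI)
  fix S assume "\<forall>f\<in>X. \<forall>g\<in>X. (f, g) \<in> (edge_adj inc X)\<^sup>*" "S \<subseteq> X" "S \<noteq> {}"
    and "\<forall>g\<in>S. \<forall>h\<in>X. inc g \<inter> inc h \<noteq> {} \<longrightarrow> h \<in> S"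
  then show "S = X" using rtrancl_edge_adj_closed[of _ _ inc X S] by blast
qed

lemma sym_edge_adj: "sym (edge_adj inc X)"
  by (auto simp: sym_def edge_adj_def)

lemma component_of_subset: "component_of inc B e \<subseteq> insert e B"
proof
  fix f assume "f \<in> component_of inc B e"
  then have "(e, f) \<in> (edge_adj inc B)\<^sup>*" by (simp add: component_of_def)
  then show "f \<in> insert e B"
    by (induction rule: rtrancl_induct) (auto simp: edge_adj_def)
qed

lemma self_in_component_of: "e \<in> component_of inc B e"
  by (simp add: component_of_def)

lemma component_of_closed:
  assumes "f \<in> component_of inc B e" "f \<in> B" "g \<in> B" "inc f \<inter> inc g \<noteq> {}"
  shows "g \<in> component_of inc B e"
proof -
  have "(f, g) \<in> edge_adj inc B" using assms(2-4) by (auto simp: edge_adj_def)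
  then show ?thesis using assms(1) by (auto simp: component_of_def)
qed

lemma edge_connected_component_of:
  assumes "e \<in> B"
  shows "edge_connected inc (component_of inc B e)"
  unfolding edge_connected_def
proof (intro allI impI)
  let ?A = "component_of inc B e"
  have AB: "?A \<subseteq> B" using component_of_subset[of inc B e] assms by auto
  fix S assume S: "S \<subseteq> ?A" "S \<noteq> {}"
    and closed: "\<forall>g\<in>S. \<forall>h\<in>?A. inc g \<inter> inc h \<noteq> {} \<longrightarrow> h \<in> S"
  obtain a where a: "a \<in> S" using S by blast
  have closed_B: "\<forall>g\<in>S. \<forall>h\<in>B. inc g \<inter> inc h \<noteq> {} \<longrightarrow> h \<in> S"
    using closed component_of_closed[of _ inc B e] S(1) AB by (metis inf_commute subsetD)
  have "(e, a) \<in> (edge_adj inc B)\<^sup>*" using a S(1) by (auto simp: component_of_def)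
  then have "(a, e) \<in> (edge_adj inc B)\<^sup>*" by (rule symD[OF sym_rtrancl[OF sym_edge_adj]])
  then have "(a, f) \<in> (edge_adj inc B)\<^sup>*" if "f \<in> ?A" for f
    using that by (auto simp: component_of_def)
  then have "?A \<subseteq> S" using rtrancl_edge_adj_closed[OF _ a closed_B] by blast
  then show "S = ?A" using S by blast
qed

lemma verts_disjoint_component_of:
  assumes "e \<in> B" "W \<subseteq> component_of inc B e" "Y \<subseteq> B - component_of inc B e"
  shows "verts inc W \<inter> verts inc Y = {}"
proof (rule ccontr)
  assume "verts inc W \<inter> verts inc Y \<noteq> {}"
  then obtain f g where "f \<in> W" "g \<in> Y" "inc f \<inter> inc g \<noteq> {}"
    unfolding verts_def by blast
  moreover have "component_of inc B e \<subseteq> B"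
    using component_of_subset assms(1) by fastforce
  ultimately have "g \<in> component_of inc B e"
    using component_of_closed[of f inc B e g] assms(2,3) by blast
  then show False using \<open>g \<in> Y\<close> assms(3) by blast
qed

lemma excess_le_if_edge_connected:
  assumes "graph E inc" "A \<subseteq> E" "edge_connected inc A" "Z \<subseteq> A" "Z \<noteq> {}"
  shows "excess inc Z \<le> excess inc A"
  using assms(4,5)
proof (induction "card (A - Z)" arbitrary: Z rule: less_induct)
  case (less Z)
  show ?case
  proof (cases "Z = A")
    case False
    obtain g h where gh: "g \<in> Z" "h \<in> A - Z" "inc g \<inter> inc h \<noteq> {}"
      using edge_connected_cut[OF assms(3) less.prems False] .
    have "inc h \<inter> verts inc Z \<noteq> {}" using gh by (auto simp: verts_def)
    then have "excess inc Z \<le> excess inc (insert h Z)"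
      using excess_insert_adjacent_ge[OF assms(1)] less.prems(1) assms(2) gh by blast
    moreover have "excess inc (insert h Z) \<le> excess inc A"
    proof (rule less.hyps)
      show "card (A - insert h Z) < card (A - Z)"
        using gh graph_finite_subset[OF assms(1,2)] by (metis Diff_insert card_Diff1_less finite_Diff)
    qed (use less.prems gh in auto)
    ultimately show ?thesis by linarith
  qed simp
qed

lemma leaf_of_pendant_edge:
  assumes "graph E inc" "Z \<subseteq> E" "h \<in> E" "h \<notin> Z" "inc h \<inter> verts inc Z \<noteq> {}"
    and "excess inc (insert h Z) \<le> excess inc Z"
  shows "\<exists>v. is_leaf inc (insert h Z) v"
proof -
  have fin: "finite (inc h)" "card (inc h) \<le> 2" using graph_inc[OF assms(1,3)] by auto
  have "card (inc h - verts inc Z) \<noteq> 0"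
    using excess_insert[OF assms(1-4)] assms(6) by linarith
  then obtain w where w: "w \<in> inc h" "w \<notin> verts inc Z"
    using fin(1) by (metis Diff_iff card.empty finite_Diff subsetI subset_empty)
  obtain u where u: "u \<in> inc h" "u \<in> verts inc Z" using assms(5) by blast
  have "card {u, w} \<le> card (inc h)" using u w fin by (intro card_mono) auto
  moreover have "u \<noteq> w" using u w by blast
  then have "card {u, w} = 2" by simp
  ultimately have two: "card (inc h) = 2" using fin(2) by linarith
  have "is_leaf inc (insert h Z) w"
    unfolding is_leaf_def
  proof
    show "\<exists>!f. f \<in> insert h Z \<and> w \<in> inc f"
      using w by (intro ex1I[of _ h]) (auto simp: verts_def)
    show "\<forall>f\<in>insert h Z. w \<in> inc f \<longrightarrow> card (inc f) = 2"
      using w two by (auto simp: verts_def)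
  qed
  then show ?thesis by blast
qed

lemma leaf_if_excess_le_proper_subset:
  assumes "graph E inc" "K \<subseteq> E" "edge_connected inc K" "Z \<subset> K" "Z \<noteq> {}"
    and "excess inc K \<le> excess inc Z"
  shows "\<exists>v. is_leaf inc K v"
  using assms(4-6)
proof (induction "card (K - Z)" arbitrary: Z rule: less_induct)
  case (less Z)
  obtain g h where gh: "g \<in> Z" "h \<in> K - Z" "inc g \<inter> inc h \<noteq> {}"
    using edge_connected_cut[OF assms(3)] less.prems(1,2) by blast
  have ZE: "Z \<subseteq> E" and hE: "h \<in> E" using gh less.prems(1) assms(2) by auto
  have adj: "inc h \<inter> verts inc Z \<noteq> {}" using gh by (auto simp: verts_def)
  show ?case
  proof (cases "insert h Z = K")
    case True
    then show ?thesis
      using leaf_of_pendant_edge[OF assms(1) ZE hE _ adj] gh less.prems(3) by auto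
  next
    case False
    show ?thesis
    proof (rule less.hyps)
      show "card (K - insert h Z) < card (K - Z)"
        using gh graph_finite_subset[OF assms(1,2)] by (metis Diff_insert card_Diff1_less finite_Diff)
      show "excess inc K \<le> excess inc (insert h Z)"
        using excess_insert_adjacent_ge[OF assms(1) ZE hE _ adj] gh less.prems(3) by force
    qed (use False gh less.prems in auto)
  qed
qed

section \<open>Leaf deletion and the kernel\<close>

definition leafless :: "('e \<Rightarrow> 'v set) \<Rightarrow> 'e set \<Rightarrow> bool" where
  "leafless inc X \<longleftrightarrow> (\<forall>v. \<not> is_leaf inc X v)"

lemma leaf_delE:
  assumes "(X, Y) \<in> leaf_del inc"
  obtains f v where "f \<in> X" "v \<in> inc f" "is_leaf inc X v" "Y = X - {f}"
  using assms unfolding leaf_del_def by blast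

lemma is_leaf_unique_edge:
  "is_leaf inc X v \<Longrightarrow> f \<in> X \<Longrightarrow> v \<in> inc f \<Longrightarrow> g \<in> X \<Longrightarrow> v \<in> inc g \<Longrightarrow> g = f"
  unfolding is_leaf_def by blast

lemma is_leaf_edge_ends:
  assumes "is_leaf inc X v" "f \<in> X" "v \<in> inc f"
  obtains w where "inc f = {v, w}" "v \<noteq> w"
proof -
  have "card (inc f) = 2" using assms unfolding is_leaf_def by blast
  then obtain a b where "inc f = {a, b}" "a \<noteq> b" by (auto simp: card_2_iff)
  with assms(3) that show ?thesis by (metis doubleton_eq_iff insertE singletonD)
qed

lemma leaf_del_keeps_leafless:
  assumes "(X, Y) \<in> leaf_del inc" "leafless inc L" "L \<subseteq> X"
  shows "L \<subseteq> Y"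
proof -
  obtain f v where fv: "f \<in> X" "v \<in> inc f" "is_leaf inc X v" "Y = X - {f}"
    using leaf_delE[OF assms(1)] .
  have "f \<notin> L"
  proof
    assume "f \<in> L"
    then have "is_leaf inc L v"
      using fv(2,3) is_leaf_unique_edge[OF fv(3,1,2)] assms(3) unfolding is_leaf_def by blast
    then show False using assms(2) unfolding leafless_def by blast
  qed
  then show ?thesis using fv(4) assms(3) by blast
qed

lemma edge_connected_leaf_del:
  assumes "edge_connected inc X" "(X, Y) \<in> leaf_del inc"
  shows "edge_connected inc Y"
  unfolding edge_connected_def
proof (intro allI impI)
  obtain f v where fv: "f \<in> X" "v \<in> inc f" "is_leaf inc X v" "Y = X - {f}"
    using leaf_delE[OF assms(2)] .
  obtain w where w: "inc f = {v, w}" "v \<noteq> w" using is_leaf_edge_ends[OF fv(3,1,2)] .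
  have via_w: "w \<in> inc h" if "h \<in> Y" "inc f \<inter> inc h \<noteq> {}" for h
  proof -
    have "v \<notin> inc h" using that fv(4) is_leaf_unique_edge[OF fv(3,1,2)] by blast
    then show ?thesis using that(2) w(1) by auto
  qed
  fix S assume S: "S \<subseteq> Y" "S \<noteq> {}"
    and closed: "\<forall>g\<in>S. \<forall>h\<in>Y. inc g \<inter> inc h \<noteq> {} \<longrightarrow> h \<in> S"
  have closed_X: "h \<in> S" if "g \<in> S" "h \<in> X" "h \<noteq> f" "inc g \<inter> inc h \<noteq> {}" for g h
    using closed that fv(4) by blast
  have X_conn: "T = X" if "T \<subseteq> X" "T \<noteq> {}" "\<forall>g\<in>T. \<forall>h\<in>X. inc g \<inter> inc h \<noteq> {} \<longrightarrow> h \<in> T" for T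
    using assms(1) that unfolding edge_connected_def by blast
  \<comment> \<open>Reattaching the leaf edge to whichever side it touches gives a closed subset of X.\<close>
  show "S = Y"
  proof (cases "\<exists>s\<in>S. inc f \<inter> inc s \<noteq> {}")
    case True
    then obtain s where s: "s \<in> S" "inc f \<inter> inc s \<noteq> {}" by blast
    have ws: "w \<in> inc s" using via_w s S(1) by blast
    have "\<forall>g\<in>insert f S. \<forall>h\<in>X. inc g \<inter> inc h \<noteq> {} \<longrightarrow> h \<in> insert f S"
    proof (intro ballI impI)
      fix g h assume g: "g \<in> insert f S" and h: "h \<in> X" and gh: "inc g \<inter> inc h \<noteq> {}"
      show "h \<in> insert f S"
      proof (cases "h = f \<or> g \<noteq> f")
        case True
        then show ?thesis using closed_X g h gh by blast
      next
        case False
        then have "h \<in> Y" "inc f \<inter> inc h \<noteq> {}" using h fv(4) gh by auto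
        then have "w \<in> inc h" by (rule via_w)
        then show ?thesis using closed_X[OF s(1) h] ws False by blast
      qed
    qed
    then have "insert f S = X" by (intro X_conn) (use S(1) fv(1,4) in auto)
    then show ?thesis using S(1) fv(4) by blast
  next
    case False
    have "\<forall>g\<in>S. \<forall>h\<in>X. inc g \<inter> inc h \<noteq> {} \<longrightarrow> h \<in> S"
    proof (intro ballI impI)
      fix g h assume g: "g \<in> S" and h: "h \<in> X" and gh: "inc g \<inter> inc h \<noteq> {}"
      have "h \<noteq> f" using False g gh by (auto simp: Int_commute)
      then show "h \<in> S" using closed_X[OF g h _ gh] by blast
    qed
    then have "S = X" by (intro X_conn) (use S fv(4) in auto)
    then show ?thesis using S(1) fv by blast
  qed
qed

lemma excess_leaf_del:
  assumes "graph E inc" "X \<subseteq> E" "edge_connected inc X" "(X, Y) \<in> leaf_del inc" "Y \<noteq> {}"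
  shows "excess inc Y = excess inc X"
proof -
  obtain f v where fv: "f \<in> X" "v \<in> inc f" "is_leaf inc X v" "Y = X - {f}"
    using leaf_delE[OF assms(4)] .
  have v_only_f: "v \<notin> inc g" if "g \<in> Y" for g
    using that fv(4) is_leaf_unique_edge[OF fv(3,1,2)] by blast
  obtain w where w: "inc f = {v, w}" "v \<noteq> w" using is_leaf_edge_ends[OF fv(3,1,2)] .
  have "{f} \<noteq> X" using assms(5) fv(4) by blast
  then obtain g h where "g \<in> {f}" "h \<in> X - {f}" "inc g \<inter> inc h \<noteq> {}"
    using edge_connected_cut[OF assms(3), of "{f}"] fv(1) by blast
  then have h: "h \<in> Y" "w \<in> inc h" using w v_only_f[of h] fv(4) by auto
  have "verts inc Y = verts inc X - {v}"
  proof
    show "verts inc Y \<subseteq> verts inc X - {v}"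
      using v_only_f fv(4) by (auto simp: verts_def)
    show "verts inc X - {v} \<subseteq> verts inc Y"
      using h w fv(4) by (auto simp: verts_def)
  qed
  moreover have "v \<in> verts inc X" using fv(1,2) by (auto simp: verts_def)
  moreover have "finite X" "finite (verts inc X)"
    using graph_finite_subset[OF assms(1,2)] finite_verts[OF assms(1,2)] by auto
  ultimately have "card (verts inc Y) = card (verts inc X) - 1" "card Y = card X - 1"
    "card (verts inc X) \<ge> 1" "card X \<ge> 1"
    using fv(1,4) by (auto simp: Suc_le_eq card_gt_0_iff)
  then show ?thesis unfolding excess_def by linarith
qed

lemma leaf_del_rtrancl_invariants:
  assumes "(A, X) \<in> (leaf_del inc)\<^sup>*"
    and "graph E inc" "A \<subseteq> E" "edge_connected inc A"
    and "L0 \<subseteq> A" "L0 \<noteq> {}" "leafless inc L0"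
  shows "X \<subseteq> A \<and> (\<forall>L. L \<subseteq> A \<longrightarrow> leafless inc L \<longrightarrow> L \<subseteq> X)
    \<and> edge_connected inc X \<and> excess inc X = excess inc A"
  using assms(1)
proof (induction rule: rtrancl_induct)
  case base
  then show ?case using assms(4) by simp
next
  case (step Y Z)
  have YA: "Y \<subseteq> A" and Yconn: "edge_connected inc Y" and Yexc: "excess inc Y = excess inc A"
    and Ykept: "\<forall>L. L \<subseteq> A \<longrightarrow> leafless inc L \<longrightarrow> L \<subseteq> Y"
    using step.IH by auto
  have "Z \<subseteq> Y" using step(2) by (auto simp: leaf_del_def)
  have kept: "\<forall>L. L \<subseteq> A \<longrightarrow> leafless inc L \<longrightarrow> L \<subseteq> Z"
  proof (intro allI impI)
    fix L assume "L \<subseteq> A" "leafless inc L"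
    then show "L \<subseteq> Z" using Ykept leaf_del_keeps_leafless[OF step(2)] by simp
  qed
  have "Z \<noteq> {}" using kept assms(5-7) by blast
  then have "excess inc Z = excess inc Y"
    using excess_leaf_del[OF assms(2) _ Yconn step(2)] YA assms(3) by blast
  then show ?case
    using \<open>Z \<subseteq> Y\<close> YA kept edge_connected_leaf_del[OF Yconn step(2)] Yexc by simp
qed

lemma kernel_edges_props:
  assumes "graph E inc" "A \<subseteq> E" "edge_connected inc A"
    and "L0 \<subseteq> A" "L0 \<noteq> {}" "leafless inc L0"
  shows "kernel_edges inc A \<subseteq> A" "leafless inc (kernel_edges inc A)"
    "edge_connected inc (kernel_edges inc A)" "excess inc (kernel_edges inc A) = excess inc A"
    "\<And>L. L \<subseteq> A \<Longrightarrow> leafless inc L \<Longrightarrow> L \<subseteq> kernel_edges inc A"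
proof -
  let ?P = "\<lambda>X. (A, X) \<in> (leaf_del inc)\<^sup>*"
  note inv = leaf_del_rtrancl_invariants[OF _ assms]
  obtain X where X: "?P X" "\<And>Y. ?P Y \<Longrightarrow> card X \<le> card Y"
    using ex_has_least_nat[of ?P A card] by blast
  have within: "Z \<subseteq> A" if "?P Z" for Z
    using inv[OF that] by (rule conjunct1)
  have keeps: "L \<subseteq> Z" if "?P Z" "L \<subseteq> A" "leafless inc L" for Z L
    using inv[OF that(1)] that(2,3) by blast
  have "finite X" using graph_finite_subset[OF assms(1) subset_trans[OF within[OF X(1)] assms(2)]] .
  \<comment> \<open>Leaf deletion terminates, and any two leafless results contain each other.\<close>
  have "leafless inc X"
    unfolding leafless_def
  proof (intro allI notI)
    fix v assume v: "is_leaf inc X v"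
    then obtain f where f: "f \<in> X" "v \<in> inc f" unfolding is_leaf_def by blast
    then have "(X, X - {f}) \<in> leaf_del inc" using v unfolding leaf_del_def by blast
    then have "card X \<le> card (X - {f})" using X by (meson rtrancl.rtrancl_into_rtrancl)
    then show False using f \<open>finite X\<close> card_Diff1_less by fastforce
  qed
  have uniq: "Y = X" if "?P Y" "leafless inc Y" for Y
    using keeps[OF X(1) within[OF that(1)] that(2)] keeps[OF that(1) within[OF X(1)] \<open>leafless inc X\<close>]
    by (rule subset_antisym)
  have "kernel_edges inc A = X"
    unfolding kernel_edges_def leafless_def[symmetric]
  proof (rule the_equality)
    show "?P X \<and> leafless inc X" using X(1) \<open>leafless inc X\<close> ..
  qed (use uniq in blast)
  then show "kernel_edges inc A \<subseteq> A" "leafless inc (kernel_edges inc A)"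
    "edge_connected inc (kernel_edges inc A)" "excess inc (kernel_edges inc A) = excess inc A"
    "\<And>L. L \<subseteq> A \<Longrightarrow> leafless inc L \<Longrightarrow> L \<subseteq> kernel_edges inc A"
    using inv[OF X(1)] \<open>leafless inc X\<close> by simp_all
qed

section \<open>Cycles\<close>

lemma card_filter_eq_sum: "finite C \<Longrightarrow> card {f\<in>C. P f} = (\<Sum>f\<in>C. of_bool (P f) :: nat)"
  by (simp add: Int_def[symmetric] sum.inter_filter[symmetric] Collect_conj_eq)

definition edge_degree :: "('e \<Rightarrow> 'v set) \<Rightarrow> 'e \<Rightarrow> 'v \<Rightarrow> nat" where
  "edge_degree inc f v = 2 * of_bool (inc f = {v}) + of_bool (v \<in> inc f \<and> card (inc f) = 2)"

lemma degree_eq_sum_edge_degree: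
  "finite C \<Longrightarrow> degree inc C v = (\<Sum>f\<in>C. edge_degree inc f v)"
  by (simp add: degree_def edge_degree_def card_filter_eq_sum sum.distrib sum_distrib_left)

lemma sum_edge_degree:
  assumes "graph E inc" "f \<in> E" "inc f \<subseteq> V" "finite V"
  shows "(\<Sum>v\<in>V. edge_degree inc f v) = 2"
proof -
  have s: "(\<Sum>v\<in>V. edge_degree inc f v)
     = 2 * card {v\<in>V. inc f = {v}} + card {v\<in>V. v \<in> inc f \<and> card (inc f) = 2}"
    using assms(4) by (simp add: edge_degree_def card_filter_eq_sum sum.distrib sum_distrib_left)
  have "card (inc f) = 1 \<or> card (inc f) = 2" using assms(1,2) unfolding graph_def by blast
  then show ?thesis
  proof
    assume one: "card (inc f) = 1"
    then obtain a where a: "inc f = {a}" by (auto simp: card_Suc_eq)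
    then have "{v\<in>V. inc f = {v}} = {a}" "{v\<in>V. v \<in> inc f \<and> card (inc f) = 2} = {}"
      using assms(3) one by auto
    then show ?thesis unfolding s by (simp only:) simp
  next
    assume two: "card (inc f) = 2"
    then have "{v\<in>V. inc f = {v}} = {}" "{v\<in>V. v \<in> inc f \<and> card (inc f) = 2} = inc f"
      using assms(3) by auto
    then show ?thesis unfolding s using two by (simp only:) simp
  qed
qed

lemma sum_degree_verts:
  assumes "graph E inc" "C \<subseteq> E"
  shows "(\<Sum>v\<in>verts inc C. degree inc C v) = 2 * card C"
proof -
  have fin: "finite C" "finite (verts inc C)"
    using graph_finite_subset[OF assms] finite_verts[OF assms] by auto
  have "(\<Sum>v\<in>verts inc C. degree inc C v) = (\<Sum>v\<in>verts inc C. \<Sum>f\<in>C. edge_degree inc f v)"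
    using degree_eq_sum_edge_degree[OF fin(1)] by (intro sum.cong) auto
  also have "\<dots> = (\<Sum>f\<in>C. \<Sum>v\<in>verts inc C. edge_degree inc f v)"
    by (rule sum.swap)
  also have "\<dots> = (\<Sum>f\<in>C. 2)"
    using sum_edge_degree[OF assms(1) _ _ fin(2)] assms(2) by (intro sum.cong) (auto simp: verts_def)
  finally show ?thesis by simp
qed

lemma excess_cycle:
  assumes "graph E inc" "C \<subseteq> E" "is_cycle inc C"
  shows "excess inc C = 0"
proof -
  have "(\<Sum>v\<in>verts inc C. degree inc C v) = 2 * card (verts inc C)"
    using assms(3) unfolding is_cycle_def by simp
  then show ?thesis using sum_degree_verts[OF assms(1,2)] by (simp add: excess_def)
qed

lemma leafless_cycle:
  assumes "is_cycle inc C"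
  shows "leafless inc C"
  unfolding leafless_def
proof (intro allI notI)
  fix v assume v: "is_leaf inc C v"
  then obtain f where f: "f \<in> C" "v \<in> inc f" unfolding is_leaf_def by blast
  have two: "\<forall>g\<in>C. v \<in> inc g \<longrightarrow> card (inc g) = 2"
    using v unfolding is_leaf_def by (rule conjunct2)
  have "{g\<in>C. inc g = {v}} = {}" using two by force
  moreover have "{g\<in>C. v \<in> inc g \<and> card (inc g) = 2} = {f}"
    using is_leaf_unique_edge[OF v f] f two by blast
  ultimately have "degree inc C v = 1" unfolding degree_def by (simp only:) simp
  moreover have "v \<in> verts inc C" using f by (auto simp: verts_def)
  ultimately show False using assms unfolding is_cycle_def by simp
qed

lemma cycle_not_psubset:
  assumes "graph E inc" "C1 \<subseteq> E" "is_cycle inc C1" "is_cycle inc C2"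
  shows "\<not> C2 \<subset> C1"
proof
  assume sub: "C2 \<subset> C1"
  have "edge_connected inc C1"
    using assms(3) connected_edges_imp_edge_connected unfolding is_cycle_def by blast
  then obtain g h where gh: "g \<in> C2" "h \<in> C1 - C2" "inc g \<inter> inc h \<noteq> {}"
    using edge_connected_cut[of inc C1 C2] sub assms(4) unfolding is_cycle_def by blast
  then obtain u where u: "u \<in> inc g" "u \<in> inc h" by blast
  have fin: "finite C1" using graph_finite_subset[OF assms(1,2)] .
  have h12: "card (inc h) = 1 \<or> card (inc h) = 2"
    using assms(1,2) gh unfolding graph_def by blast
  \<comment> \<open>At the common vertex u the edge h adds to the degree 2 that u already has in C2.\<close>
  have "degree inc C2 u = 2" "degree inc C1 u = 2"
    using u gh sub assms(3,4) unfolding is_cycle_def by (auto simp: verts_def)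
  moreover have "card {f\<in>C2. inc f = {u}} \<le> card {f\<in>C1. inc f = {u}}"
    "card {f\<in>C2. u \<in> inc f \<and> card (inc f) = 2} \<le> card {f\<in>C1. u \<in> inc f \<and> card (inc f) = 2}"
    using fin sub by (intro card_mono; auto)+
  moreover from h12 have "card {f\<in>C2. inc f = {u}} < card {f\<in>C1. inc f = {u}}
    \<or> card {f\<in>C2. u \<in> inc f \<and> card (inc f) = 2} < card {f\<in>C1. u \<in> inc f \<and> card (inc f) = 2}"
  proof
    assume "card (inc h) = 1"
    then have "inc h = {u}" using u by (auto simp: card_Suc_eq)
    then show ?thesis using fin sub gh by (intro disjI1 psubset_card_mono) auto
  next
    assume "card (inc h) = 2"
    then show ?thesis using fin sub gh u by (intro disjI2 psubset_card_mono) auto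
  qed
  ultimately show False unfolding degree_def by linarith
qed

section \<open>Independence in M_k(G)\<close>

lemma Mk_circuit_excess:
  assumes "Mk_circuit E inc k C"
  shows "C \<subseteq> E" "C \<noteq> {}" "excess inc C = int k"
  using assms unfolding Mk_circuit_def Let_def excess_def by auto

lemma exists_Mk_circuit:
  assumes "graph E inc" "k \<ge> 1" "Y \<subseteq> E" "Y \<noteq> {}" "excess inc Y \<ge> int k"
  obtains C where "Mk_circuit E inc k C" "C \<subseteq> Y"
proof -
  let ?P = "\<lambda>Z. Z \<subseteq> Y \<and> Z \<noteq> {} \<and> excess inc Z \<ge> int k"
  obtain Z where Z: "?P Z" "\<And>W. ?P W \<Longrightarrow> card Z \<le> card W"
    using ex_has_least_nat[of ?P Y card] assms(3-5) by blast
  have ZE: "Z \<subseteq> E" using Z(1) assms(3) by blast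
  have smaller: "excess inc D < int k" if "D \<subset> Z" "D \<noteq> {}" for D
  proof -
    have "card D < card Z" using that(1) graph_finite_subset[OF assms(1) ZE] by (rule psubset_card_mono[rotated])
    then have "\<not> ?P D" using Z(2) by (meson not_le)
    then show ?thesis using Z(1) that by auto
  qed
  \<comment> \<open>Minimality forces equality, since removing one edge lowers the excess by at most one.\<close>
  have "excess inc Z = int k"
  proof (rule ccontr)
    assume ne: "excess inc Z \<noteq> int k"
    obtain z where z: "z \<in> Z" using Z(1) by blast
    have zE: "z \<in> E" using z ZE by blast
    have "excess inc (insert z (Z - {z})) \<le> excess inc (Z - {z}) + 1"
      using ZE by (intro excess_insert_le[OF assms(1) _ zE]) auto
    then have "excess inc Z \<le> excess inc (Z - {z}) + 1" using z by (simp add: insert_absorb)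
    moreover have "excess inc (Z - {z}) < int k"
    proof (cases "Z - {z} = {}")
      case True
      show ?thesis unfolding True using assms(2) by simp
    qed (use smaller z in blast)
    ultimately show False using Z(1) ne by linarith
  qed
  then have "Mk_circuit E inc k Z"
    unfolding Mk_circuit_def Let_def
  proof (intro conjI allI impI notI)
    fix D assume "D \<subset> Z" "D \<subseteq> E \<and> D \<noteq> {} \<and> card D = card (verts inc D) + k"
    then show False using smaller[of D] by (simp add: excess_def)
  qed (use Z(1) ZE in \<open>auto simp: excess_def\<close>)
  then show ?thesis using that Z(1) by blast
qed

lemma Mk_indep_iff_excess:
  assumes "graph E inc" "k \<ge> 1"
  shows "Mk_indep E inc k X \<longleftrightarrow> X \<subseteq> E \<and> (\<forall>Y. Y \<subseteq> X \<longrightarrow> Y \<noteq> {} \<longrightarrow> excess inc Y < int k)"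
proof
  assume indep: "Mk_indep E inc k X"
  then have XE: "X \<subseteq> E" unfolding Mk_indep_def by blast
  have "excess inc Y < int k" if Y: "Y \<subseteq> X" "Y \<noteq> {}" for Y
  proof (rule ccontr)
    assume "\<not> excess inc Y < int k"
    obtain C where "Mk_circuit E inc k C" "C \<subseteq> Y"
      by (rule exists_Mk_circuit[OF assms, of Y]) (use Y XE \<open>\<not> excess inc Y < int k\<close> in auto)
    then show False using indep Y(1) unfolding Mk_indep_def by blast
  qed
  then show "X \<subseteq> E \<and> (\<forall>Y. Y \<subseteq> X \<longrightarrow> Y \<noteq> {} \<longrightarrow> excess inc Y < int k)"
    using XE by blast
next
  assume *: "X \<subseteq> E \<and> (\<forall>Y. Y \<subseteq> X \<longrightarrow> Y \<noteq> {} \<longrightarrow> excess inc Y < int k)"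
  show "Mk_indep E inc k X"
    unfolding Mk_indep_def
  proof (intro conjI allI impI notI)
    fix C assume C: "Mk_circuit E inc k C" "C \<subseteq> X"
    have "excess inc C < int k" using * C(2) Mk_circuit_excess(2)[OF C(1)] by blast
    then show False using Mk_circuit_excess(3)[OF C(1)] by simp
  qed (use * in blast)
qed

section \<open>Exchanges at a kernel edge\<close>

lemma excess_pos_if_two_cycles:
  assumes "graph E inc" "K \<subseteq> E" "edge_connected inc K" "leafless inc K"
    and "C1 \<subseteq> K" "C2 \<subseteq> K" "C1 \<noteq> C2" "is_cycle inc C1" "is_cycle inc C2"
  shows "excess inc K \<ge> 1"
proof (rule ccontr)
  assume "\<not> excess inc K \<ge> 1"
  have C1E: "C1 \<subseteq> E" using assms(2,5) by (rule subset_trans[rotated])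
  have "C1 \<noteq> K"
    using cycle_not_psubset[OF assms(1) C1E assms(8,9)] assms(6,7) by blast
  then have "C1 \<subset> K" using assms(5) by blast
  moreover have "C1 \<noteq> {}" using assms(8) unfolding is_cycle_def by blast
  moreover have "excess inc K \<le> excess inc C1"
    using excess_cycle[OF assms(1) C1E assms(8)] \<open>\<not> excess inc K \<ge> 1\<close> by simp
  ultimately have "\<exists>v. is_leaf inc K v" by (rule leaf_if_excess_le_proper_subset[OF assms(1-3)])
  then show False using assms(4) unfolding leafless_def by blast
qed

lemma excess_lt_if_avoids_kernel_edge:
  assumes "graph E inc" "A \<subseteq> E" "edge_connected inc A"
    and "K \<subseteq> A" "edge_connected inc K" "leafless inc K"
    and "excess inc K = excess inc A" "excess inc A \<ge> 1" "e \<in> K" "Z \<subseteq> A - {e}"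
  shows "excess inc Z < excess inc A"
proof (rule ccontr)
  assume "\<not> excess inc Z < excess inc A"
  then have Z_ge: "excess inc Z \<ge> excess inc A" by simp
  have ZE: "Z \<subseteq> E" and KE: "K \<subseteq> E" using assms(2,4,10) by auto
  have "Z \<noteq> {}" using Z_ge assms(8) by auto
  then have "excess inc (Z \<union> K) \<le> excess inc A"
    using assms(4,10) by (intro excess_le_if_edge_connected[OF assms(1-3)]) auto
  then have "excess inc K \<le> excess inc (Z \<inter> K)"
    using excess_supermodular[OF assms(1) ZE KE] Z_ge assms(7) by linarith
  show False
  proof (cases "Z \<inter> K = {}")
    case True
    then show ?thesis using \<open>excess inc K \<le> excess inc (Z \<inter> K)\<close> assms(7,8) by simp
  next
    case False
    have "Z \<inter> K \<subset> K" using assms(9,10) by blast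
    then have "\<exists>v. is_leaf inc K v"
      using False \<open>excess inc K \<le> excess inc (Z \<inter> K)\<close>
      by (rule leaf_if_excess_le_proper_subset[OF assms(1) KE assms(5)])
    then show ?thesis using assms(6) unfolding leafless_def by blast
  qed
qed

lemma excess_lt_off_component:
  assumes "graph E inc" "k \<ge> 1" "Mk_indep E inc k B" "e \<in> B"
    and "\<And>Z. Z \<subseteq> component_of inc B e - {e} \<Longrightarrow> excess inc Z < excess inc (component_of inc B e)"
    and "Y \<subseteq> B - {e}" "Y \<noteq> {}"
  shows "excess inc Y < int k - 1"
proof -
  define A where "A = component_of inc B e"
  define Y' where "Y' = Y - A"
  have BE: "B \<subseteq> E" and B_small: "\<And>X. X \<subseteq> B \<Longrightarrow> X \<noteq> {} \<Longrightarrow> excess inc X < int k"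
    using assms(3) unfolding Mk_indep_iff_excess[OF assms(1,2)] by blast+
  have AB: "A \<subseteq> B" using component_of_subset assms(4) unfolding A_def by fastforce
  have Y'B: "Y' \<subseteq> B - A" using assms(6) unfolding Y'_def by blast
  have "Y = (Y \<inter> A) \<union> Y'" unfolding Y'_def by blast
  then have "excess inc Y = excess inc (Y \<inter> A) + excess inc Y'"
    using excess_disjoint_Un[OF assms(1), of "Y \<inter> A" Y'] assms(6) BE Y'B
      verts_disjoint_component_of[OF assms(4), of "Y \<inter> A" inc Y'] unfolding A_def by force
  moreover have "excess inc (A \<union> Y') = excess inc A + excess inc Y'"
    using excess_disjoint_Un[OF assms(1), of A Y'] AB BE Y'B
      verts_disjoint_component_of[OF assms(4), of A inc Y'] unfolding A_def by force
  moreover have "excess inc (A \<union> Y') < int k"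
    using AB Y'B self_in_component_of[of e inc B] unfolding A_def by (intro B_small) auto
  moreover have "excess inc (Y \<inter> A) < excess inc A"
    using assms(5,6) unfolding A_def by blast
  ultimately show ?thesis by linarith
qed

lemma Mk_base_tight_set:
  assumes "graph E inc" "k \<ge> 1" "Mk_base E inc k B" "g \<in> E - B"
  obtains Y where "Y \<subseteq> B" "Y \<noteq> {}" "excess inc Y = int k - 1" "inc g \<subseteq> verts inc Y"
proof -
  have indep: "Mk_indep E inc k B" using assms(3) unfolding Mk_base_def by blast
  then have BE: "B \<subseteq> E" and B_small: "\<And>X. X \<subseteq> B \<Longrightarrow> X \<noteq> {} \<Longrightarrow> excess inc X < int k"
    unfolding Mk_indep_iff_excess[OF assms(1,2)] by blast+
  have "\<not> Mk_indep E inc k (insert g B)" using assms(3,4) unfolding Mk_base_def by blast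
  moreover have "insert g B \<subseteq> E" using assms(4) BE by blast
  ultimately obtain C where C: "Mk_circuit E inc k C" "C \<subseteq> insert g B"
    unfolding Mk_indep_def by blast
  have "g \<in> C" using C indep unfolding Mk_indep_def by blast
  define Y where "Y = C - {g}"
  have YB: "Y \<subseteq> B" using C(2) unfolding Y_def by blast
  have "Y \<noteq> {}"
  proof
    assume "Y = {}"
    then have "C = {g}" using \<open>g \<in> C\<close> unfolding Y_def by blast
    then show False
      using Mk_circuit_excess(3)[OF C(1)] excess_singleton_le[OF assms(1)] assms(2,4) by force
  qed
  have "C = insert g Y" using \<open>g \<in> C\<close> unfolding Y_def by blast
  then have "excess inc C = excess inc Y + 1 - int (card (inc g - verts inc Y))"
    using excess_insert[OF assms(1), of Y g] YB BE assms(4) unfolding Y_def by force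
  \<comment> \<open>The circuit C reaches excess k, while Y, being independent, stays below k.\<close>
  moreover have "excess inc Y < int k" using B_small[OF YB \<open>Y \<noteq> {}\<close>] .
  ultimately have "excess inc Y = int k - 1" "card (inc g - verts inc Y) = 0"
    using Mk_circuit_excess(3)[OF C(1)] by linarith+
  moreover have "finite (inc g)" using graph_inc(1)[OF assms(1)] assms(4) by blast
  ultimately show ?thesis using that YB \<open>Y \<noteq> {}\<close> by simp
qed

lemma Mk_indep_exchange:
  assumes "graph E inc" "k \<ge> 1" "Mk_indep E inc k B"
    and "\<And>Y. Y \<subseteq> B - {e} \<Longrightarrow> Y \<noteq> {} \<Longrightarrow> excess inc Y < int k - 1"
    and "f \<in> E"
  shows "Mk_indep E inc k (insert f (B - {e}))"
  unfolding Mk_indep_iff_excess[OF assms(1,2)]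
proof (intro conjI allI impI)
  have BE: "B \<subseteq> E" and B_small: "\<And>X. X \<subseteq> B \<Longrightarrow> X \<noteq> {} \<Longrightarrow> excess inc X < int k"
    using assms(3) unfolding Mk_indep_iff_excess[OF assms(1,2)] by blast+
  show "insert f (B - {e}) \<subseteq> E" using BE assms(5) by blast
  fix Y assume Y: "Y \<subseteq> insert f (B - {e})" "Y \<noteq> {}"
  show "excess inc Y < int k"
  proof (cases "f \<in> Y \<and> f \<notin> B")
    case False
    then have "Y \<subseteq> B" using Y(1) by blast
    then show ?thesis using B_small Y(2) by blast
  next
    case True
    define Y' where "Y' = Y - {f}"
    have Y'E: "Y' \<subseteq> E" and Y'B: "Y' \<subseteq> B - {e}" using Y(1) BE True unfolding Y'_def by auto
    have "Y = insert f Y'" "f \<notin> Y'" using True unfolding Y'_def by blast+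
    then have "excess inc Y \<le> excess inc Y' + 1"
      using excess_insert_le[OF assms(1) Y'E assms(5)] by simp
    moreover have "excess inc Y' < int k - 1 \<or> Y' = {}" using assms(4) Y'B by blast
    moreover have "excess inc Y \<le> 0" if "Y' = {}"
      using that \<open>Y = insert f Y'\<close> excess_singleton_le[OF assms(1,5)] by simp
    ultimately show ?thesis using assms(2) by force
  qed
qed

lemma Mk_base_exchange:
  assumes "graph E inc" "k \<ge> 1" "Mk_base E inc k B" "e \<in> B"
    and no_tight: "\<And>Y. Y \<subseteq> B - {e} \<Longrightarrow> Y \<noteq> {} \<Longrightarrow> excess inc Y < int k - 1"
    and "f \<in> E - B"
  shows "Mk_base E inc k (insert f (B - {e}))"
  unfolding Mk_base_def
proof (intro conjI allI impI notI)
  have indep: "Mk_indep E inc k B" using assms(3) unfolding Mk_base_def by blast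
  then have BE: "B \<subseteq> E" and B_small: "\<And>X. X \<subseteq> B \<Longrightarrow> X \<noteq> {} \<Longrightarrow> excess inc X < int k"
    unfolding Mk_indep_iff_excess[OF assms(1,2)] by blast+
  show "Mk_indep E inc k (insert f (B - {e}))"
    using Mk_indep_exchange[OF assms(1,2) indep no_tight] assms(6) by blast
  \<comment> \<open>Each edge outside B is spanned by a tight subset of B, and every tight subset contains e.\<close>
  have tight: "\<exists>Y. Y \<subseteq> B \<and> e \<in> Y \<and> excess inc Y = int k - 1 \<and> inc g \<subseteq> verts inc Y"
    if g: "g \<in> E - B" for g
  proof -
    obtain Y where Y: "Y \<subseteq> B" "Y \<noteq> {}" "excess inc Y = int k - 1" "inc g \<subseteq> verts inc Y"
      using Mk_base_tight_set[OF assms(1-3) g] .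
    have "e \<in> Y" using no_tight[of Y] Y by force
    then show ?thesis using Y by blast
  qed
  fix X assume X: "insert f (B - {e}) \<subset> X" and X_indep: "Mk_indep E inc k X"
  have XE: "X \<subseteq> E" and X_small: "\<And>Y. Y \<subseteq> X \<Longrightarrow> Y \<noteq> {} \<Longrightarrow> excess inc Y < int k"
    using X_indep unfolding Mk_indep_iff_excess[OF assms(1,2)] by blast+
  obtain g where g: "g \<in> X" "g \<notin> insert f (B - {e})" using X by blast
  show False
  proof (cases "g = e")
    case True
    then have "insert f B \<subseteq> X" using X g by blast
    then have "Mk_indep E inc k (insert f B)" using X_indep unfolding Mk_indep_def by blast
    then show False using assms(3,6) unfolding Mk_base_def by blast
  next
    case False
    then have gEB: "g \<in> E - B" using g XE by blast
    obtain Yg where Yg: "Yg \<subseteq> B" "e \<in> Yg" "excess inc Yg = int k - 1" "inc g \<subseteq> verts inc Yg"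
      using tight[OF gEB] by blast
    obtain Yf where Yf: "Yf \<subseteq> B" "e \<in> Yf" "excess inc Yf = int k - 1" "inc f \<subseteq> verts inc Yf"
      using tight[OF assms(6)] by blast
    define U where "U = Yg \<union> Yf"
    have YgE: "Yg \<subseteq> E" and YfE: "Yf \<subseteq> E" using Yg(1) Yf(1) BE by auto
    then have UE: "U \<subseteq> E" unfolding U_def by blast
    have "U \<subseteq> B" unfolding U_def using Yg(1) Yf(1) by (rule Un_least)
    then have U: "e \<in> U" "f \<notin> U" "g \<notin> U"
      using Yg(2) assms(6) gEB unfolding U_def by blast+
    have "excess inc (Yg \<inter> Yf) < int k" using Yg(1,2) Yf(2) by (intro B_small) auto
    then have "excess inc U \<ge> int k - 1"
      using excess_supermodular[OF assms(1) YgE YfE] Yg(3) Yf(3) unfolding U_def by linarith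
    moreover have "f \<noteq> g" using g(2) by blast
    moreover have "inc f \<subseteq> verts inc U" "inc g \<subseteq> verts inc U"
      using Yg(4) Yf(4) unfolding U_def by auto
    ultimately have "excess inc (insert g (insert f (U - {e}))) \<ge> int k"
      using excess_exchange_spanned_edges[OF assms(1) UE U] by fastforce
    moreover have "excess inc (insert g (insert f (U - {e}))) < int k"
      using X g(1) Yg(1) Yf(1) unfolding U_def by (intro X_small) auto
    ultimately show False by linarith
  qed
qed

lemma Mk_cocircuit_if_exchanges:
  assumes "Mk_base E inc k B" "e \<in> B"
    and exchange: "\<And>f. f \<in> E - B \<Longrightarrow> Mk_base E inc k (insert f (B - {e}))"
  shows "Mk_cocircuit E inc k ((E - B) \<union> {e})"
  unfolding Mk_cocircuit_def Let_def
proof (intro conjI allI impI notI)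
  have BE: "B \<subseteq> E" using assms(1) unfolding Mk_base_def Mk_indep_def by blast
  then show "(E - B) \<union> {e} \<subseteq> E" using assms(2) by blast
  fix B' assume B': "Mk_base E inc k B'" "((E - B) \<union> {e}) \<inter> B' = {}"
  moreover have "B' \<subseteq> E" using B'(1) unfolding Mk_base_def Mk_indep_def by blast
  ultimately have "B' \<subset> B" using assms(2) by blast
  then show False using B'(1) assms(1) unfolding Mk_base_def by blast
next
  fix D assume D: "D \<subset> (E - B) \<union> {e}"
    and D_meets: "D \<subseteq> E \<and> (\<forall>B'. Mk_base E inc k B' \<longrightarrow> D \<inter> B' \<noteq> {})"
  show False
  proof (cases "e \<in> D")
    case True
    then obtain f where "f \<in> E - B" "f \<notin> D" using D by blast
    then have "D \<inter> insert f (B - {e}) = {}" using D by blast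
    then show False using D_meets exchange[OF \<open>f \<in> E - B\<close>] by blast
  next
    case False
    then have "D \<inter> B = {}" using D by blast
    then show False using D_meets assms(1) by blast
  qed
qed

lemma fund_cocircuit_if_exchanges:
  assumes "Mk_base E inc k B" "e \<in> B"
    and exchange: "\<And>f. f \<in> E - B \<Longrightarrow> Mk_base E inc k (insert f (B - {e}))"
  shows "fund_cocircuit E inc k e B = (E - B) \<union> {e}"
  unfolding fund_cocircuit_def
proof (rule the_equality)
  show "Mk_cocircuit E inc k ((E - B) \<union> {e}) \<and> ((E - B) \<union> {e}) \<inter> B = {e}"
    using Mk_cocircuit_if_exchanges[OF assms] assms(2) by blast
  fix K assume K: "Mk_cocircuit E inc k K \<and> K \<inter> B = {e}"
  have KE: "K \<subseteq> E" and K_meets: "\<And>B'. Mk_base E inc k B' \<Longrightarrow> K \<inter> B' \<noteq> {}"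
    using K unfolding Mk_cocircuit_def Let_def by blast+
  have "E - B \<subseteq> K"
  proof
    fix f assume "f \<in> E - B"
    then show "f \<in> K" using K_meets[OF exchange[OF \<open>f \<in> E - B\<close>]] K by blast
  qed
  then show "K = (E - B) \<union> {e}" using KE K by blast
qed

theorem mainTheorem20:
  fixes E :: "'e set" and inc :: "'e \<Rightarrow> 'v set" and k :: nat and B :: "'e set" and e :: 'e
  assumes "graph E inc"
    and "k \<ge> 1"
    and "Mk_connected E inc k"
    and "Mk_base E inc k B"
    and "e \<in> B"
    and "A = component_of inc B e"
    and "\<exists>C1 C2. C1 \<subseteq> A \<and> C2 \<subseteq> A \<and> C1 \<noteq> C2 \<and> is_cycle inc C1 \<and> is_cycle inc C2"
    and "e \<in> kernel_edges inc A"
  shows "fund_cocircuit E inc k e B = (E - B) \<union> {e}"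
proof -
  have indep: "Mk_indep E inc k B" using assms(4) unfolding Mk_base_def by blast
  have AE: "A \<subseteq> E"
    using assms(5,6) component_of_subset[of inc B e] indep unfolding Mk_indep_def by blast
  have A_conn: "edge_connected inc A" using edge_connected_component_of[OF assms(5)] assms(6) by simp
  obtain C1 C2 where C: "C1 \<subseteq> A" "C2 \<subseteq> A" "C1 \<noteq> C2" "is_cycle inc C1" "is_cycle inc C2"
    using assms(7) by blast
  have "C1 \<noteq> {}" using C(4) unfolding is_cycle_def by blast
  define K where "K = kernel_edges inc A"
  note K = kernel_edges_props[OF assms(1) AE A_conn C(1) \<open>C1 \<noteq> {}\<close> leafless_cycle[OF C(4)],
      folded K_def]
  have "excess inc K \<ge> 1"
    using excess_pos_if_two_cycles[OF assms(1) _ K(3,2) K(5)[OF C(1) leafless_cycle[OF C(4)]]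
        K(5)[OF C(2) leafless_cycle[OF C(5)]] C(3-5)] K(1) AE by blast
  then have "excess inc A \<ge> 1" using K(4) by simp
  then have "excess inc Z < excess inc A" if "Z \<subseteq> A - {e}" for Z
    using excess_lt_if_avoids_kernel_edge[OF assms(1) AE A_conn K(1,3,2,4) _ _ that] assms(8)
    unfolding K_def by blast
  then have "excess inc Y < int k - 1" if "Y \<subseteq> B - {e}" "Y \<noteq> {}" for Y
    using excess_lt_off_component[OF assms(1,2) indep assms(5) _ that] assms(6) by blast
  then show ?thesis
    using fund_cocircuit_if_exchanges[OF assms(4,5)] Mk_base_exchange[OF assms(1,2,4,5)] by blast
qed

end
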